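(* Let $G$ be an infinite connected simple undirected graph with vertex degrees bounded by $v<\infty$ and internal scaling dimension $D$ (i.e. $D_S(x)=D$ for all vertices $x$). Fix an integer $l_0\ge 1$ and let $\hat G_{cl}$ be the purified clique graph with overlap threshold $l_0$. Then for every clique $C$ of $G$ the upper internal scaling dimension of $\hat G_{cl}$ at $C$ satisfies $\overline{D}_S^{\hat G_{cl}}(C)\le D$.
   Context: Graphs are simple and undirected with graph metric $d$. For a vertex $x$ of a graph $H$, $U_n(x)$ is the ball of radius $n$ in $H$, $D_n(x)=\ln(\#U_n(x))/\ln n$, $\underline D_S(x)=\liminf_n D_n(x)$, $\overline D_S(x)=\limsup_n D_n(x)$; if these agree the value is $D_S(x)$, and $H$ has internal scaling dimension $D$ if $D_S(x)=D$ for all $x$. A clique of $G$ is a maximal complete subgraph. The purified clique graph $\hat G_{cl}$ with threshold $l_0$ has the cliques of $G$ as vertices, two distinct cliques $C,C'$ being adjacent iff $\#(C\cap C')\ge l_0$. *)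

theory Defs
  imports "HOL-Analysis.Analysis"
begin

definition simple_graph :: "'a set \<Rightarrow> ('a \<Rightarrow> 'a \<Rightarrow> bool) \<Rightarrow> bool" where
  "simple_graph V E \<longleftrightarrow> (\<forall>x y. E x y \<longrightarrow> x \<in> V \<and> y \<in> V \<and> x \<noteq> y \<and> E y x)"

inductive walk :: "('a \<Rightarrow> 'a \<Rightarrow> bool) \<Rightarrow> 'a \<Rightarrow> 'a \<Rightarrow> nat \<Rightarrow> bool" for E where
  walk_refl: "walk E x x 0"
| walk_step: "E x y \<Longrightarrow> walk E y z n \<Longrightarrow> walk E x z (Suc n)"

definition connected_graph :: "'a set \<Rightarrow> ('a \<Rightarrow> 'a \<Rightarrow> bool) \<Rightarrow> bool" where
  "connected_graph V E \<longleftrightarrow> (\<forall>x\<in>V. \<forall>y\<in>V. \<exists>n. walk E x y n)"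

definition degree :: "('a \<Rightarrow> 'a \<Rightarrow> bool) \<Rightarrow> 'a \<Rightarrow> nat" where
  "degree E x = card {y. E x y}"

definition degree_bounded :: "'a set \<Rightarrow> ('a \<Rightarrow> 'a \<Rightarrow> bool) \<Rightarrow> nat \<Rightarrow> bool" where
  "degree_bounded V E v \<longleftrightarrow> (\<forall>x\<in>V. finite {y. E x y} \<and> degree E x \<le> v)"

definition ball_graph :: "'a set \<Rightarrow> ('a \<Rightarrow> 'a \<Rightarrow> bool) \<Rightarrow> 'a \<Rightarrow> nat \<Rightarrow> 'a set" where
  "ball_graph V E x n = {y\<in>V. \<exists>k\<le>n. walk E x y k}"

definition D_n :: "'a set \<Rightarrow> ('a \<Rightarrow> 'a \<Rightarrow> bool) \<Rightarrow> 'a \<Rightarrow> nat \<Rightarrow> real" where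
  "D_n V E x n = ln (real (card (ball_graph V E x n))) / ln (real n)"

definition upper_dim :: "'a set \<Rightarrow> ('a \<Rightarrow> 'a \<Rightarrow> bool) \<Rightarrow> 'a \<Rightarrow> ereal" where
  "upper_dim V E x = limsup (\<lambda>n. ereal (D_n V E x n))"

definition lower_dim :: "'a set \<Rightarrow> ('a \<Rightarrow> 'a \<Rightarrow> bool) \<Rightarrow> 'a \<Rightarrow> ereal" where
  "lower_dim V E x = liminf (\<lambda>n. ereal (D_n V E x n))"

definition has_internal_scaling_dim :: "'a set \<Rightarrow> ('a \<Rightarrow> 'a \<Rightarrow> bool) \<Rightarrow> ereal \<Rightarrow> bool" where
  "has_internal_scaling_dim V E D \<longleftrightarrow> (\<forall>x\<in>V. lower_dim V E x = D \<and> upper_dim V E x = D)"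

definition complete_sub :: "('a \<Rightarrow> 'a \<Rightarrow> bool) \<Rightarrow> 'a set \<Rightarrow> bool" where
  "complete_sub E C \<longleftrightarrow> (\<forall>x\<in>C. \<forall>y\<in>C. x \<noteq> y \<longrightarrow> E x y)"

definition is_clique :: "'a set \<Rightarrow> ('a \<Rightarrow> 'a \<Rightarrow> bool) \<Rightarrow> 'a set \<Rightarrow> bool" where
  "is_clique V E C \<longleftrightarrow> C \<subseteq> V \<and> complete_sub E C \<and>
     (\<forall>C'. C \<subseteq> C' \<and> C' \<subseteq> V \<and> complete_sub E C' \<longrightarrow> C' = C)"

definition clique_vertices :: "'a set \<Rightarrow> ('a \<Rightarrow> 'a \<Rightarrow> bool) \<Rightarrow> 'a set set" where
  "clique_vertices V E = {C. is_clique V E C}"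

definition purified_clique_edge :: "'a set \<Rightarrow> ('a \<Rightarrow> 'a \<Rightarrow> bool) \<Rightarrow> nat \<Rightarrow> 'a set \<Rightarrow> 'a set \<Rightarrow> bool" where
  "purified_clique_edge V E l0 C C' \<longleftrightarrow>
     is_clique V E C \<and> is_clique V E C' \<and> C \<noteq> C' \<and> card (C \<inter> C') \<ge> l0"

end

theory Submission imports Defs "HOL-Real_Asymp.Real_Asymp" begin

text \<open>A path of length k from C to C' in the purified clique graph (l0 \<ge> 1) yields,
  for any x \<in> C, a walk of length at most k in G from x to some y \<in> C', and C' then lies in
  the closed neighbourhood of y. So the clique ball of radius n is covered by the power sets of
  at most #U_n(x) closed neighbourhoods, each with at most v + 1 vertices:
  #U_n(C) \<le> 2^(v+1) #U_n(x). The constant factor disappears after dividing logarithms by ln n.\<close>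

definition closed_nbhd :: "('a \<Rightarrow> 'a \<Rightarrow> bool) \<Rightarrow> 'a \<Rightarrow> 'a set" where
  "closed_nbhd E y = insert y {z. E y z}"

lemma walk_in_vertices:
  assumes "walk E x y k" "simple_graph V E" "x \<in> V"
  shows "y \<in> V"
  using assms by (induction rule: walk.induct) (auto simp: simple_graph_def)

lemma finite_walk_endpoints:
  assumes "simple_graph V E" "degree_bounded V E v" "x \<in> V"
  shows "finite {y. walk E x y k}"
  using assms(3)
proof (induction k arbitrary: x)
  case 0
  have "{y. walk E x y 0} = {x}" by (auto elim: walk.cases intro: walk.intros)
  then show ?case by simp
next
  case (Suc k)
  have "{y. walk E x y (Suc k)} \<subseteq> (\<Union>z\<in>{z. E x z}. {y. walk E z y k})"
    by (blast elim: walk.cases)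
  moreover have "finite (\<Union>z\<in>{z. E x z}. {y. walk E z y k})"
  proof (rule finite_UN_I)
    show "finite {z. E x z}" using assms(2) Suc.prems unfolding degree_bounded_def by blast
    fix z assume "z \<in> {z. E x z}"
    then have "z \<in> V" using assms(1) unfolding simple_graph_def by blast
    then show "finite {y. walk E z y k}" by (rule Suc.IH)
  qed
  ultimately show ?case by (rule finite_subset)
qed

lemma finite_ball_graph:
  assumes "simple_graph V E" "degree_bounded V E v" "x \<in> V"
  shows "finite (ball_graph V E x n)"
proof -
  have "ball_graph V E x n \<subseteq> (\<Union>k\<le>n. {y. walk E x y k})" unfolding ball_graph_def by auto
  then show ?thesis using finite_walk_endpoints[OF assms] by (meson finite_UN_I finite_atMost finite_subset)
qed

lemma center_in_ball_graph: "x \<in> V \<Longrightarrow> x \<in> ball_graph V E x n"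
  unfolding ball_graph_def by (auto intro: walk.intros)

lemma card_ball_graph_ge_1:
  assumes "simple_graph V E" "degree_bounded V E v" "x \<in> V"
  shows "card (ball_graph V E x n) \<ge> 1"
  using finite_ball_graph[OF assms] center_in_ball_graph[OF assms(3)]
  by (metis One_nat_def Suc_leI card_gt_0_iff empty_iff)

lemma finite_closed_nbhd_card_le:
  assumes "degree_bounded V E v" "y \<in> V"
  shows "finite (closed_nbhd E y)" "card (closed_nbhd E y) \<le> v + 1"
proof -
  have fin: "finite {z. E y z}" and deg: "card {z. E y z} \<le> v"
    using assms unfolding degree_bounded_def degree_def by auto
  then show "finite (closed_nbhd E y)" unfolding closed_nbhd_def by simp
  have "card (closed_nbhd E y) \<le> card {z. E y z} + 1"
    unfolding closed_nbhd_def using fin by (simp add: card_insert_if)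
  with deg show "card (closed_nbhd E y) \<le> v + 1" by simp
qed

lemma clique_subset_closed_nbhd: "is_clique V E C \<Longrightarrow> y \<in> C \<Longrightarrow> C \<subseteq> closed_nbhd E y"
  unfolding is_clique_def complete_sub_def closed_nbhd_def by auto

lemma clique_nonempty:
  assumes "is_clique V E C" "V \<noteq> {}"
  shows "C \<noteq> {}"
proof
  assume "C = {}"
  obtain x where "x \<in> V" using assms(2) by auto
  have maximal: "\<forall>C'. C \<subseteq> C' \<and> C' \<subseteq> V \<and> complete_sub E C' \<longrightarrow> C' = C"
    using assms(1) unfolding is_clique_def by blast
  have "complete_sub E {x}" unfolding complete_sub_def by simp
  then have "{x} = C" using maximal \<open>x \<in> V\<close> \<open>C = {}\<close> by blast
  with \<open>C = {}\<close> show False by simp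
qed

lemma walk_of_purified_clique_walk:
  assumes "walk (purified_clique_edge V E l0) C C' k" "l0 \<ge> 1" "x \<in> C"
  shows "\<exists>y\<in>C'. \<exists>j\<le>k. walk E x y j"
  using assms
proof (induction arbitrary: x rule: walk.induct)
  case (walk_refl C)
  then show ?case by (auto intro: walk.intros)
next
  case (walk_step C1 C2 C3 n)
  have "card (C1 \<inter> C2) \<ge> 1" using walk_step.hyps(1) walk_step.prems(1)
    unfolding purified_clique_edge_def by simp
  then obtain z where z: "z \<in> C1" "z \<in> C2" by (metis card.empty disjoint_iff not_one_le_zero)
  obtain y j where y: "y \<in> C3" "j \<le> n" "walk E z y j" using walk_step.IH z(2) walk_step.prems(1) by blast
  show ?case
  proof (cases "z = x")
    case True
    with y show ?thesis by (meson le_SucI)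
  next
    case False
    then have "E x z" using walk_step.hyps(1) walk_step.prems(2) z(1)
      unfolding purified_clique_edge_def is_clique_def complete_sub_def by auto
    with y show ?thesis by (meson Suc_le_mono walk.walk_step)
  qed
qed

lemma purified_clique_ball_subset:
  assumes "simple_graph V E" "l0 \<ge> 1" "x \<in> C" "x \<in> V"
  shows "ball_graph (clique_vertices V E) (purified_clique_edge V E l0) C n
           \<subseteq> (\<Union>y\<in>ball_graph V E x n. Pow (closed_nbhd E y))"
proof
  fix C' assume "C' \<in> ball_graph (clique_vertices V E) (purified_clique_edge V E l0) C n"
  then obtain k where k: "k \<le> n" "walk (purified_clique_edge V E l0) C C' k" "is_clique V E C'"
    unfolding ball_graph_def clique_vertices_def by auto
  then obtain y j where y: "y \<in> C'" "j \<le> k" "walk E x y j"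
    using walk_of_purified_clique_walk[OF k(2) assms(2,3)] by blast
  have "j \<le> n" using y(2) k(1) by simp
  then have "y \<in> ball_graph V E x n"
    using walk_in_vertices[OF y(3) assms(1,4)] y(3) unfolding ball_graph_def by blast
  moreover have "C' \<subseteq> closed_nbhd E y" using clique_subset_closed_nbhd[OF k(3) y(1)] .
  ultimately show "C' \<in> (\<Union>y\<in>ball_graph V E x n. Pow (closed_nbhd E y))" by auto
qed

lemma card_purified_clique_ball_le:
  assumes "simple_graph V E" "degree_bounded V E v" "l0 \<ge> 1" "x \<in> C" "x \<in> V"
  shows "card (ball_graph (clique_vertices V E) (purified_clique_edge V E l0) C n)
           \<le> 2 ^ (v + 1) * card (ball_graph V E x n)"
proof -
  let ?U = "ball_graph V E x n"
  have U_vertices: "y \<in> V" if "y \<in> ?U" for y using that unfolding ball_graph_def by auto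
  have finite_U: "finite ?U" using finite_ball_graph[OF assms(1,2,5)] .
  have finite_cover: "finite (\<Union>y\<in>?U. Pow (closed_nbhd E y))"
    using finite_U finite_closed_nbhd_card_le(1)[OF assms(2) U_vertices] by auto
  have "card (ball_graph (clique_vertices V E) (purified_clique_edge V E l0) C n)
          \<le> card (\<Union>y\<in>?U. Pow (closed_nbhd E y))"
    using card_mono[OF finite_cover purified_clique_ball_subset[OF assms(1,3-5)]] .
  also have "\<dots> \<le> (\<Sum>y\<in>?U. card (Pow (closed_nbhd E y)))" using card_UN_le[OF finite_U] .
  also have "\<dots> \<le> (\<Sum>y\<in>?U. 2 ^ (v + 1))"
  proof (rule sum_mono)
    fix y assume "y \<in> ?U"
    then have "card (Pow (closed_nbhd E y)) = 2 ^ card (closed_nbhd E y)"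
      using finite_closed_nbhd_card_le(1)[OF assms(2) U_vertices] by (simp add: card_Pow)
    also have "\<dots> \<le> 2 ^ (v + 1)"
      using finite_closed_nbhd_card_le(2)[OF assms(2) U_vertices[OF \<open>y \<in> ?U\<close>]]
      by (rule power_increasing) simp
    finally show "card (Pow (closed_nbhd E y)) \<le> 2 ^ (v + 1)" .
  qed
  also have "\<dots> = 2 ^ (v + 1) * card ?U" by simp
  finally show ?thesis .
qed

lemma D_n_le_of_ball_card_le:
  fixes K :: real
  assumes "K \<ge> 1" "n \<ge> 2"
    and "real (card (ball_graph V' E' c n)) \<le> K * real (card (ball_graph V E x n))"
    and "card (ball_graph V E x n) \<ge> 1"
  shows "D_n V' E' c n \<le> ln K / ln (real n) + D_n V E x n"
proof -
  let ?S = "real (card (ball_graph V' E' c n))" and ?U = "real (card (ball_graph V E x n))"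
  have U: "?U \<ge> 1" using assms(4) by simp
  have "ln ?S \<le> ln (K * ?U)"
  proof (cases "?S = 0")
    case True
    have "1 * 1 \<le> K * ?U" using assms(1) U by (intro mult_mono) auto
    with True show ?thesis using ln_ge_zero by simp
  next
    case False
    then show ?thesis using assms(3) by (subst ln_le_cancel_iff) auto
  qed
  also have "\<dots> = ln K + ln ?U" using assms(1) U by (simp add: ln_mult)
  finally have "ln ?S / ln (real n) \<le> (ln K + ln ?U) / ln (real n)"
    using assms(2) by (intro divide_right_mono) auto
  then show ?thesis unfolding D_n_def by (simp add: add_divide_distrib)
qed

lemma upper_dim_le_of_ball_card_le:
  fixes K :: real
  assumes "K \<ge> 1"
    and "\<And>n. real (card (ball_graph V' E' c n)) \<le> K * real (card (ball_graph V E x n))"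
    and "\<And>n. card (ball_graph V E x n) \<ge> 1"
  shows "upper_dim V' E' c \<le> upper_dim V E x"
proof -
  have "(\<lambda>n::nat. ln K / ln (real n)) \<longlonglongrightarrow> 0" by real_asymp
  then have vanishing: "(\<lambda>n. ereal (ln K / ln (real n))) \<longlonglongrightarrow> 0"
    by (simp add: zero_ereal_def)
  have "upper_dim V' E' c \<le> limsup (\<lambda>n. ereal (ln K / ln (real n)) + ereal (D_n V E x n))"
    unfolding upper_dim_def
  proof (rule Limsup_mono)
    show "\<forall>\<^sub>F n in sequentially. ereal (D_n V' E' c n) \<le> ereal (ln K / ln (real n)) + ereal (D_n V E x n)"
      using D_n_le_of_ball_card_le[OF assms(1) _ assms(2,3)]
      by (auto intro!: eventually_sequentiallyI[of 2])
  qed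
  also have "\<dots> = upper_dim V E x"
    unfolding upper_dim_def
    using ereal_limsup_lim_add[OF vanishing, of "\<lambda>n. ereal (D_n V E x n)"] by simp
  finally show ?thesis .
qed

theorem mainTheorem5:
  fixes V :: "'a set" and E :: "'a \<Rightarrow> 'a \<Rightarrow> bool" and v l0 :: nat and D :: ereal and C :: "'a set"
  assumes "simple_graph V E"
    and "infinite V"
    and "connected_graph V E"
    and "degree_bounded V E v"
    and "has_internal_scaling_dim V E D"
    and "l0 \<ge> 1"
    and "is_clique V E C"
  shows "upper_dim (clique_vertices V E) (purified_clique_edge V E l0) C \<le> D"
proof -
  have "V \<noteq> {}" using assms(2) by auto
  then obtain x where x: "x \<in> C" using clique_nonempty[OF assms(7)] by blast
  then have x_vertex: "x \<in> V" using assms(7) unfolding is_clique_def by auto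
  have "upper_dim (clique_vertices V E) (purified_clique_edge V E l0) C \<le> upper_dim V E x"
  proof (rule upper_dim_le_of_ball_card_le[where K = "2 ^ (v + 1)"])
    fix n
    show "real (card (ball_graph (clique_vertices V E) (purified_clique_edge V E l0) C n))
            \<le> 2 ^ (v + 1) * real (card (ball_graph V E x n))"
      using card_purified_clique_ball_le[OF assms(1,4,6) x x_vertex, of n]
      by (metis of_nat_le_iff of_nat_mult of_nat_numeral of_nat_power)
    show "card (ball_graph V E x n) \<ge> 1" using card_ball_graph_ge_1[OF assms(1,4) x_vertex] .
  qed (rule one_le_power, simp)
  also have "\<dots> = D" using assms(5) x_vertex unfolding has_internal_scaling_dim_def by simp
  finally show ?thesis .
qed

end
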